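(* Let $\mathcal{H}_d$ be a complex Hilbert space of finite dimension $d$ with $2\leq d<\infty$. For any two observables $\mathsf{M}_1$ and $\mathsf{M}_2$ on $\mathcal{H}_d$ we have $$\frac{1}{2} < \frac{2+d}{2(1+d)} \leq \mathrm{jmd}(\mathsf{M}_1,\mathsf{M}_2).$$ In particular, there are no maximally incompatible pairs of observables on a finite dimensional Hilbert space.
   Context: An observable on a Hilbert space $\mathcal{H}$ with outcome space $\Omega$ (a Borel subset of some $\mathbb{R}^n$, with its Borel $\sigma$-algebra) is a normalized positive operator valued measure (POVM) $\mathsf{M}$ on $\Omega$, i.e. $\mathsf{M}(X)\geq 0$ are bounded operators, $\mathsf{M}$ is $\sigma$-additive in the weak operator topology and $\mathsf{M}(\Omega)=I$. An observable $\mathsf{T}$ is trivial if $\mathsf{T}(X)=\mu(X)I$ for some probability measure $\mu$ on $\Omega$. Two observables $\mathsf{M}_1,\mathsf{M}_2$ with outcome spaces $\Omega_1,\Omega_2$ are jointly measurable if there is an observable $\mathsf{M}$ on $\Omega_1\times\Omega_2$ with $\mathsf{M}(X\times\Omega_2)=\mathsf{M}_1(X)$ and $\mathsf{M}(\Omega_1\times Y)=\mathsf{M}_2(Y)$ for all Borel $X\subseteq\Omega_1$, $Y\subseteq\Omega_2$. The joint measurability region $J(\mathsf{M}_1,\mathsf{M}_2)$ is the set of $(\lambda,\mu)\in[0,1]\times[0,1]$ for which there exist trivial observables $\mathsf{T}_1$ on $\Omega_1$ and $\mathsf{T}_2$ on $\Omega_2$ such that $\lambda\mathsf{M}_1+(1-\lambda)\mathsf{T}_1$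 and $\mu\mathsf{M}_2+(1-\mu)\mathsf{T}_2$ are jointly measurable. The joint measurability degree $\mathrm{jmd}(\mathsf{M}_1,\mathsf{M}_2)$ is the greatest number $0\leq\lambda\leq 1$ such that $(\lambda,\lambda)\in J(\mathsf{M}_1,\mathsf{M}_2)$. The pair $\mathsf{M}_1,\mathsf{M}_2$ is maximally incompatible if $J(\mathsf{M}_1,\mathsf{M}_2)=\{(\lambda,\mu)\in[0,1]^2 : \lambda+\mu\leq 1\}$ (equivalently, $\mathrm{jmd}(\mathsf{M}_1,\mathsf{M}_2)=1/2$). *)

theory Defs
  imports "HOL-Probability.Probability"
begin

text \<open>The Hilbert space H_d is modelled as complex^'d (d = CARD('d)), operators on it
  as complex d x d matrices complex^'d^'d acting by matrix-vector multiplication.\<close>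

definition cinner :: "complex^'d::finite \<Rightarrow> complex^'d \<Rightarrow> complex" where
  "cinner v w = (\<Sum>i\<in>UNIV. cnj (v $ i) * w $ i)"

definition pos_op :: "complex^'d::finite^'d \<Rightarrow> bool" where
  "pos_op A \<longleftrightarrow> (\<forall>v. Im (cinner v (A *v v)) = 0 \<and> Re (cinner v (A *v v)) \<ge> 0)"

definition events :: "'a::topological_space set \<Rightarrow> 'a set set" where
  "events \<Omega> = {X. X \<in> sets borel \<and> X \<subseteq> \<Omega>}"

text \<open>Normalized POVM on outcome space Omega (only its values on Borel subsets of Omega matter).\<close>
definition observable :: "'a::topological_space set \<Rightarrow> ('a set \<Rightarrow> complex^'d::finite^'d) \<Rightarrow> bool" where
  "observable \<Omega> M \<longleftrightarrow>
     (\<forall>X\<in>events \<Omega>. pos_op (M X)) \<and>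
     (\<forall>A :: nat \<Rightarrow> 'a set. (\<forall>n. A n \<in> events \<Omega>) \<longrightarrow> disjoint_family A \<longrightarrow>
        (\<forall>v w. (\<lambda>n. cinner v (M (A n) *v w)) sums cinner v (M (\<Union>n. A n) *v w))) \<and>
     M \<Omega> = mat 1"

definition trivial_obs :: "'a::topological_space set \<Rightarrow> ('a set \<Rightarrow> complex^'d::finite^'d) \<Rightarrow> bool" where
  "trivial_obs \<Omega> T \<longleftrightarrow> observable \<Omega> T \<and>
     (\<exists>\<mu>. prob_space \<mu> \<and> space \<mu> = \<Omega> \<and> sets \<mu> = sets (restrict_space borel \<Omega>) \<and>
          (\<forall>X\<in>events \<Omega>. T X = mat (complex_of_real (measure \<mu> X))))"

definition jointly_measurable ::
  "'a::topological_space set \<Rightarrow> 'b::topological_space set \<Rightarrow>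
   ('a set \<Rightarrow> complex^'d::finite^'d) \<Rightarrow> ('b set \<Rightarrow> complex^'d^'d) \<Rightarrow> bool" where
  "jointly_measurable \<Omega>1 \<Omega>2 M1 M2 \<longleftrightarrow>
     (\<exists>M :: ('a \<times> 'b) set \<Rightarrow> complex^'d^'d. observable (\<Omega>1 \<times> \<Omega>2) M \<and>
        (\<forall>X\<in>events \<Omega>1. M (X \<times> \<Omega>2) = M1 X) \<and>
        (\<forall>Y\<in>events \<Omega>2. M (\<Omega>1 \<times> Y) = M2 Y))"

definition jm_region ::
  "'a::topological_space set \<Rightarrow> 'b::topological_space set \<Rightarrow>
   ('a set \<Rightarrow> complex^'d::finite^'d) \<Rightarrow> ('b set \<Rightarrow> complex^'d^'d) \<Rightarrow> (real \<times> real) set" where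
  "jm_region \<Omega>1 \<Omega>2 M1 M2 = {(a, b). a \<in> {0..1} \<and> b \<in> {0..1} \<and>
     (\<exists>T1 T2. trivial_obs \<Omega>1 T1 \<and> trivial_obs \<Omega>2 T2 \<and>
        jointly_measurable \<Omega>1 \<Omega>2 (\<lambda>X. a *\<^sub>R M1 X + (1 - a) *\<^sub>R T1 X)
                                   (\<lambda>Y. b *\<^sub>R M2 Y + (1 - b) *\<^sub>R T2 Y))}"

text \<open>Joint measurability degree: the greatest lambda in [0,1] with (lambda,lambda) in J,
  rendered as the supremum (which is that greatest element whenever it exists).\<close>
definition jmd ::
  "'a::topological_space set \<Rightarrow> 'b::topological_space set \<Rightarrow>
   ('a set \<Rightarrow> complex^'d::finite^'d) \<Rightarrow> ('b set \<Rightarrow> complex^'d^'d) \<Rightarrow> real" where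
  "jmd \<Omega>1 \<Omega>2 M1 M2 = Sup {a. a \<in> {0..1} \<and> (a, a) \<in> jm_region \<Omega>1 \<Omega>2 M1 M2}"

definition maximally_incompatible ::
  "'a::topological_space set \<Rightarrow> 'b::topological_space set \<Rightarrow>
   ('a set \<Rightarrow> complex^'d::finite^'d) \<Rightarrow> ('b set \<Rightarrow> complex^'d^'d) \<Rightarrow> bool" where
  "maximally_incompatible \<Omega>1 \<Omega>2 M1 M2 \<longleftrightarrow>
     jm_region \<Omega>1 \<Omega>2 M1 M2 = {(a, b). a \<in> {0..1} \<and> b \<in> {0..1} \<and> a + b \<le> 1}"

end

theory Submission
  imports Defs
begin

text \<open>
  The joint observable comes from optimal universal cloning. For operators A, B on a
  d-dimensional space put
    Phi(A, B) = (tr B A + tr A B + AB + BA) / (2(d+1)),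
  the Heisenberg picture of the optimal 1 -> 2 cloning channel evaluated at A \<otimes> B.
  It maps pairs of positive operators to positive operators (Cauchy-Schwarz and AM-GM) and
  Phi(A, I) = lam A + (1 - lam) (tr A / d) I with lam = (d+2)/(2(d+1)) > 1/2.
  Entries of an observable are complex combinations of finite Borel measures (polarization), so
  Z \<mapsto> Phi(M1, M2)(Z) is defined on all Borel subsets of the product by product measures;
  its quadratic forms are countably additive and nonnegative on rectangles, hence nonnegative
  everywhere (Caratheodory extension plus uniqueness on the Int-stable generator). Its marginals
  are the noisy versions of M1 and M2 with trivial noise X \<mapsto> (tr M(X) / d) I, so
  (lam, lam) lies in the joint measurability region.
\<close>

section \<open>Sesquilinear forms and positive operators\<close>

definition sesq :: "complex^'d::finite^'d \<Rightarrow> complex^'d \<Rightarrow> complex^'d \<Rightarrow> complex" where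
  "sesq A v w = cinner v (A *v w)"

lemma sesq_expand: "sesq A v w = (\<Sum>i\<in>UNIV. \<Sum>j\<in>UNIV. cnj (v$i) * A$i$j * w$j)"
  unfolding sesq_def cinner_def matrix_vector_mult_def
  by (simp add: sum_distrib_left mult.assoc)

lemma cinner_axis: "cinner (axis i 1) w = w $ i"
  unfolding cinner_def axis_def by (simp add: if_distrib[of cnj] mult_if_delta cong: if_cong)

lemma sesq_axis_left: "sesq A (axis i 1) w = (A *v w) $ i"
  unfolding sesq_def cinner_axis ..

lemma mat_entry_eq_sesq: "A $ i $ j = sesq A (axis i 1) (axis j 1)"
  unfolding sesq_axis_left by (simp add: matrix_vector_mult_def axis_def mult_delta_right)

lemma sesq_add_scaled:
  "sesq A (v + c *s w) (v + c *s w)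
     = sesq A v v + c * sesq A v w + cnj c * sesq A w v + cnj c * c * sesq A w w"
  unfolding sesq_expand by (simp add: algebra_simps sum.distrib sum_distrib_left)

lemma sesq_polarization:
  "sesq A v w = (sesq A (w + 1 *s v) (w + 1 *s v) + \<i> * sesq A (w + \<i> *s v) (w + \<i> *s v)
     - sesq A (w + (-1) *s v) (w + (-1) *s v) - \<i> * sesq A (w + (-\<i>) *s v) (w + (-\<i>) *s v)) / 4"
  unfolding sesq_add_scaled by (simp add: algebra_simps)

lemma sesq_mat: "sesq (mat c) v w = c * cinner v w"
  unfolding sesq_def cinner_def matrix_vector_mult_def mat_def
  by (simp add: mult_delta_left mult_delta_right sum_distrib_left mult_ac)

lemma pos_opD:
  assumes "pos_op A" shows "Im (sesq A v v) = 0" and "Re (sesq A v v) \<ge> 0"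
  using assms unfolding pos_op_def sesq_def by auto

lemma pos_op_sesq_real: "pos_op A \<Longrightarrow> sesq A v v = of_real (Re (sesq A v v))"
  using pos_opD[of A v] by (simp add: complex_eq_iff)

lemma pos_op_mat: "c \<ge> 0 \<Longrightarrow> pos_op (mat (of_real c))"
  unfolding pos_op_def sesq_def[symmetric] sesq_mat
  by (auto simp: cinner_def Re_sum Im_sum intro!: sum_nonneg mult_nonneg_nonneg)

lemma pos_op_sesq_cnj:
  assumes "pos_op A" shows "sesq A v w = cnj (sesq A w v)"
  using pos_opD[OF assms, of "v + 1 *s w"] pos_opD[OF assms, of "v + \<i> *s w"]
    pos_opD(1)[OF assms, of v] pos_opD(1)[OF assms, of w]
  unfolding sesq_add_scaled by (simp add: complex_eq_iff)

lemma pos_op_cauchy_schwarz: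
  assumes A: "pos_op A"
  shows "(cmod (sesq A w v))\<^sup>2 \<le> Re (sesq A w w) * Re (sesq A v v)"
proof -
  define b where "b = sesq A w v"
  define a where "a = Re (sesq A w w)"
  define c where "c = Re (sesq A v v)"
  define B where "B = (cmod b)\<^sup>2"
  have "a \<ge> 0" "c \<ge> 0" unfolding a_def c_def using pos_opD(2)[OF A] by auto
  have quadratic: "0 \<le> c - 2 * t * B + t\<^sup>2 * B * a" for t :: real
  proof -
    define z where "z = - (of_real t * b)"
    have bb: "b * cnj b = of_real B" unfolding B_def by (rule complex_norm_square[symmetric])
    have "sesq A (v + z *s w) (v + z *s w) = sesq A v v + z * cnj b + cnj z * b + cnj z * z * sesq A w w"
      unfolding sesq_add_scaled b_def using pos_op_sesq_cnj[OF A, of v w] by simp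
    also have "\<dots> = sesq A v v - of_real (2 * t * B) + of_real (t\<^sup>2 * B) * sesq A w w"
      unfolding z_def using bb by (simp add: power2_eq_square algebra_simps) (simp add: mult.assoc[symmetric])
    finally have "Re (sesq A (v + z *s w) (v + z *s w)) = c - 2 * t * B + t\<^sup>2 * B * a"
      using pos_opD(1)[OF A, of w] unfolding a_def c_def by simp
    then show ?thesis using pos_opD(2)[OF A, of "v + z *s w"] by simp
  qed
  have "B \<le> a * c"
  proof (cases "a = 0")
    case True
    have "\<not> B > 0"
    proof
      assume "B > 0"
      with quadratic[of "(c + 1) / (2 * B)"] True show False by (simp add: field_simps)
    qed
    then show ?thesis using True by (simp add: B_def)
  next
    case False
    with \<open>a \<ge> 0\<close> quadratic[of "1 / a"] show ?thesis
      by (simp add: field_simps power2_eq_square)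
  qed
  then show ?thesis unfolding B_def b_def a_def c_def .
qed

lemma cinner_cauchy_schwarz: "(cmod (cinner v w))\<^sup>2 \<le> Re (cinner v v) * Re (cinner w w)"
  using pos_op_cauchy_schwarz[OF pos_op_mat[of 1], of v w] by (simp add: sesq_mat)

lemma pos_op_diag: "pos_op A \<Longrightarrow> A $ i $ i = of_real (Re (A $ i $ i)) \<and> Re (A $ i $ i) \<ge> 0"
  unfolding mat_entry_eq_sesq[of A i i] using pos_op_sesq_real pos_opD(2) by blast

lemma pos_op_trace_real: "pos_op A \<Longrightarrow> trace A = of_real (Re (trace A))"
  unfolding trace_def using pos_op_diag[of A] by (simp add: complex_eq_iff Im_sum)

lemma pos_op_trace_nonneg: "pos_op A \<Longrightarrow> Re (trace A) \<ge> 0"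
  unfolding trace_def Re_sum using pos_op_diag by (auto intro: sum_nonneg)

lemma pos_op_norm_le_trace:
  assumes A: "pos_op A"
  shows "Re (cinner (A *v v) (A *v v)) \<le> Re (trace A) * Re (sesq A v v)"
proof -
  have "Re (cinner (A *v v) (A *v v)) = (\<Sum>i\<in>UNIV. (cmod (sesq A (axis i 1) v))\<^sup>2)"
    unfolding cinner_def Re_sum
  proof (intro sum.cong refl)
    fix i
    show "Re (cnj ((A *v v) $ i) * (A *v v) $ i) = (cmod (sesq A (axis i 1) v))\<^sup>2"
      unfolding sesq_axis_left cmod_power2 by (simp add: power2_eq_square)
  qed
  also have "\<dots> \<le> (\<Sum>i\<in>UNIV. Re (sesq A (axis i 1) (axis i 1)) * Re (sesq A v v))"
    by (intro sum_mono pos_op_cauchy_schwarz[OF A])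
  also have "\<dots> = Re (trace A) * Re (sesq A v v)"
    unfolding trace_def Re_sum sum_distrib_right mat_entry_eq_sesq ..
  finally show ?thesis .
qed

lemma cinner_cnj: "cnj (cinner v w) = cinner w v"
  unfolding cinner_def by (simp add: mult.commute)

lemma pos_op_sesq_mult: "pos_op A \<Longrightarrow> sesq (A ** B) v w = cinner (A *v v) (B *v w)"
  using pos_op_sesq_cnj[of A v "B *v w"]
  unfolding sesq_def cinner_cnj by (simp add: matrix_vector_mul_assoc)

section \<open>The cloning map\<close>

definition clone_joint :: "complex^'d::finite^'d \<Rightarrow> complex^'d^'d \<Rightarrow> complex^'d^'d" where
  "clone_joint A B = (\<chi> i j. (trace B * A$i$j + trace A * B$i$j + (A ** B)$i$j + (B ** A)$i$j)
     / (2 * (1 + of_nat CARD('d))))"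

lemma clone_joint_commute: "clone_joint A B = clone_joint B A"
  unfolding clone_joint_def by (simp add: algebra_simps)

lemma sesq_clone_joint:
  fixes A B :: "complex^'d::finite^'d"
  shows "sesq (clone_joint A B) v v
     = (trace B * sesq A v v + trace A * sesq B v v + sesq (A ** B) v v + sesq (B ** A) v v)
       / (2 * (1 + of_nat CARD('d)))"
  unfolding sesq_expand clone_joint_def
  by (simp add: algebra_simps sum.distrib sum_distrib_left sum_divide_distrib add_divide_distrib)

lemma two_abs_le_add_of_square_le_mult:
  fixes r x y :: real
  assumes "0 \<le> x" "0 \<le> y" "r\<^sup>2 \<le> x * y"
  shows "2 * \<bar>r\<bar> \<le> x + y"
proof (rule power2_le_imp_le)
  have "0 \<le> (x - y)\<^sup>2" by simp
  then show "(2 * \<bar>r\<bar>)\<^sup>2 \<le> (x + y)\<^sup>2"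
    using assms(3) by (simp add: power_mult_distrib power2_eq_square algebra_simps)
qed (use assms in simp)

lemma clone_joint_pos:
  fixes A B :: "complex^'d::finite^'d"
  assumes A: "pos_op A" and B: "pos_op B"
  shows "pos_op (clone_joint A B)"
  unfolding pos_op_def sesq_def[symmetric]
proof
  fix v
  define qA qB tA tB where "qA = Re (sesq A v v)" and "qB = Re (sesq B v v)"
    and "tA = Re (trace A)" and "tB = Re (trace B)"
  define r where "r = Re (cinner (A *v v) (B *v v))"
  have nonneg: "0 \<le> qA" "0 \<le> qB" "0 \<le> tA" "0 \<le> tB"
    unfolding qA_def qB_def tA_def tB_def
    using pos_opD(2) pos_op_trace_nonneg A B by auto
  have "sesq A v v = of_real qA" "sesq B v v = of_real qB"
    "trace A = of_real tA" "trace B = of_real tB"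
    unfolding qA_def qB_def tA_def tB_def
    using pos_op_sesq_real A B pos_op_trace_real by blast+
  moreover have "sesq (A ** B) v v + sesq (B ** A) v v = of_real (2 * r)"
    unfolding pos_op_sesq_mult[OF A] pos_op_sesq_mult[OF B] r_def
      cinner_cnj[of "A *v v" "B *v v", symmetric]
    by (simp add: complex_eq_iff)
  ultimately have "sesq (clone_joint A B) v v
      = of_real ((tB * qA + tA * qB + 2 * r) / (2 * (1 + real CARD('d))))"
    unfolding sesq_clone_joint by (simp add: add.assoc)
  moreover have "r\<^sup>2 \<le> (tB * qA) * (tA * qB)"
  proof -
    have "r\<^sup>2 \<le> (cmod (cinner (A *v v) (B *v v)))\<^sup>2"
      unfolding r_def by (simp add: abs_Re_le_cmod power_mono flip: abs_le_square_iff)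
    also have "\<dots> \<le> Re (cinner (A *v v) (A *v v)) * Re (cinner (B *v v) (B *v v))"
      by (rule cinner_cauchy_schwarz)
    also have "\<dots> \<le> (tA * qA) * (tB * qB)"
      using pos_op_norm_le_trace[OF A, of v] pos_op_norm_le_trace[OF B, of v] nonneg
      unfolding tA_def qA_def tB_def qB_def
      by (intro mult_mono) (auto simp: cinner_def Re_sum intro!: sum_nonneg)
    finally show ?thesis by (simp add: mult_ac)
  qed
  then have "2 * \<bar>r\<bar> \<le> tB * qA + tA * qB"
    using nonneg by (intro two_abs_le_add_of_square_le_mult) auto
  ultimately show "Im (sesq (clone_joint A B) v v) = 0 \<and> 0 \<le> Re (sesq (clone_joint A B) v v)"
    by simp
qed

lemma clone_joint_mat1:
  fixes A :: "complex^'d::finite^'d"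
  defines "lam \<equiv> (2 + real CARD('d)) / (2 * (1 + real CARD('d)))"
  shows "clone_joint A (mat 1) = lam *\<^sub>R A + (1 - lam) *\<^sub>R mat (trace A / of_nat CARD('d))"
proof -
  have "(of_nat CARD('d) :: complex) \<noteq> 0" "1 + (of_nat CARD('d) :: complex) \<noteq> 0"
    by (simp, metis of_nat_Suc of_nat_eq_0_iff plus_1_eq_Suc nat.distinct(1))
  then show ?thesis
    unfolding clone_joint_def trace_I matrix_mul_rid matrix_mul_lid lam_def vec_eq_iff
      vector_add_component vector_scaleR_component
    by (simp add: mat_def scaleR_conv_of_real field_simps) (simp add: add_divide_distrib)
qed

lemma clone_joint_mat1_mat1: "clone_joint (mat 1) (mat 1 :: complex^'d::finite^'d) = mat 1"
  unfolding clone_joint_mat1 trace_I by (simp flip: scaleR_left_distrib)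

section \<open>Countably additive set functions on products\<close>

definition borel_countably_additive :: "('x::topological_space set \<Rightarrow> 'c::real_normed_vector) \<Rightarrow> bool" where
  "borel_countably_additive f \<longleftrightarrow>
     (\<forall>A. (\<forall>n. A n \<in> sets borel) \<longrightarrow> disjoint_family A \<longrightarrow> (\<lambda>n. f (A n)) sums f (\<Union>n. A n))"

lemma borel_countably_additiveD:
  "borel_countably_additive f \<Longrightarrow> (\<And>n. A n \<in> sets borel) \<Longrightarrow> disjoint_family A
    \<Longrightarrow> (\<lambda>n. f (A n)) sums f (\<Union>n. A n)"
  unfolding borel_countably_additive_def by blast

lemma sums_const_self_eq_0: "(\<lambda>n. c) sums (c :: 'c::real_normed_vector) \<Longrightarrow> c = 0"
  using LIMSEQ_const_iff summable_LIMSEQ_zero sums_summable by blast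

lemma borel_countably_additive_empty:
  assumes "borel_countably_additive f" shows "f {} = 0"
  using borel_countably_additiveD[OF assms, of "\<lambda>n. {}"]
  by (intro sums_const_self_eq_0) (simp add: disjoint_family_on_def)

lemma borel_countably_additive_Un:
  assumes f: "borel_countably_additive f" and "A \<in> sets borel" "B \<in> sets borel" "A \<inter> B = {}"
  shows "f (A \<union> B) = f A + f B"
proof -
  define C where "C n = (if n = 0 then A else if n = 1 then B else {})" for n :: nat
  have "(\<lambda>n. f (C n)) sums f (\<Union>n. C n)"
    by (rule borel_countably_additiveD[OF f]) (use assms in \<open>auto simp: C_def disjoint_family_on_def\<close>)
  moreover have "(\<Union>n. C n) = A \<union> B" unfolding C_def by (auto split: if_splits)
  moreover have "(\<lambda>n. f (C n)) sums (\<Sum>n\<in>{0, 1}. f (C n))"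
    by (rule sums_finite) (auto simp: C_def borel_countably_additive_empty[OF f])
  ultimately show ?thesis using sums_unique2 by (fastforce simp: C_def)
qed

lemma borel_countably_additive_Compl:
  assumes "borel_countably_additive f" "A \<in> sets borel"
  shows "f (UNIV - A) = f UNIV - f A"
  using borel_countably_additive_Un[OF assms(1,2), of "UNIV - A"] assms(2)
  by (simp add: Un_absorb1 algebra_simps)

abbreviation borel_rectangles :: "('a::topological_space \<times> 'b::topological_space) set set" where
  "borel_rectangles \<equiv> {X \<times> Y | X Y. X \<in> sets borel \<and> Y \<in> sets borel}"

lemma sets_borel_prod_eq_sigma_rectangles:
  "sets (borel :: ('a::second_countable_topology \<times> 'b::second_countable_topology) measure)
     = sigma_sets UNIV borel_rectangles"
proof -
  have "sets (borel :: ('a \<times> 'b) measure) = sets (borel \<Otimes>\<^sub>M borel)" by (metis borel_prod)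
  then show ?thesis unfolding sets_pair_measure by simp
qed

lemma borel_countably_additive_eq_on_Times:
  fixes f g :: "('a::second_countable_topology \<times> 'b::second_countable_topology) set \<Rightarrow> 'c::real_normed_vector"
  assumes f: "borel_countably_additive f" and g: "borel_countably_additive g"
    and rect: "\<And>X Y. X \<in> sets borel \<Longrightarrow> Y \<in> sets borel \<Longrightarrow> f (X \<times> Y) = g (X \<times> Y)"
    and Z: "Z \<in> sets borel"
  shows "f Z = g Z"
proof -
  have "Int_stable (borel_rectangles :: ('a \<times> 'b) set set)"
    using Int_stable_pair_measure_generator[of "borel :: 'a measure" "borel :: 'b measure"] by simp
  moreover have "(borel_rectangles :: ('a \<times> 'b) set set) \<subseteq> Pow UNIV" by auto
  moreover have "Z \<in> sigma_sets UNIV borel_rectangles"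
    using Z sets_borel_prod_eq_sigma_rectangles by blast
  ultimately show ?thesis
  proof (induction rule: sigma_sets_induct_disjoint)
    case (basic A) then show ?case using rect by auto
  next
    case empty then show ?case
      using borel_countably_additive_empty[OF f] borel_countably_additive_empty[OF g] by simp
  next
    case (compl A)
    then have "A \<in> sets borel" using sets_borel_prod_eq_sigma_rectangles by blast
    then show ?case
      using compl borel_countably_additive_Compl[OF f] borel_countably_additive_Compl[OF g]
        rect[of UNIV UNIV] by simp
  next
    case (union A)
    then have "\<And>n. A n \<in> sets borel" using sets_borel_prod_eq_sigma_rectangles by blast
    then show ?case
      using union borel_countably_additiveD[OF f, of A] borel_countably_additiveD[OF g, of A]
        sums_unique2 by force
  qed
qed

lemma semiring_of_sets_borel_rectangles:
  "semiring_of_sets UNIV (borel_rectangles :: ('a::topological_space \<times> 'b::topological_space) set set)"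
proof
  show "borel_rectangles \<subseteq> Pow UNIV" "{} \<in> borel_rectangles" by auto
  fix R S assume "R \<in> (borel_rectangles :: ('a \<times> 'b) set set)" "S \<in> (borel_rectangles :: ('a \<times> 'b) set set)"
  then obtain A B C D where R: "R = A \<times> B" "A \<in> sets borel" "B \<in> sets borel"
    and S: "S = C \<times> D" "C \<in> sets borel" "D \<in> sets borel" by blast
  show "R \<inter> S \<in> borel_rectangles" using R S by (auto simp: Times_Int_Times)
  let ?P = "{(A - C) \<times> B, (A \<inter> C) \<times> (B - D)}"
  have "?P \<subseteq> borel_rectangles" "disjoint ?P" "R - S = \<Union>?P"
    using R S by (auto simp: disjoint_def)
  then show "\<exists>P\<subseteq>borel_rectangles. finite P \<and> disjoint P \<and> R - S = \<Union>P"
    by (intro exI[of _ ?P]) auto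
qed

lemma finite_measure_extending_rectangles:
  fixes f :: "('a::second_countable_topology \<times> 'b::second_countable_topology) set \<Rightarrow> real"
  assumes f: "borel_countably_additive f"
    and rect: "\<And>X Y. X \<in> sets borel \<Longrightarrow> Y \<in> sets borel \<Longrightarrow> f (X \<times> Y) \<ge> 0"
  obtains N where "finite_measure N" "sets N = sets borel"
    "\<And>R. R \<in> borel_rectangles \<Longrightarrow> measure N R = f R"
proof -
  interpret semiring_of_sets UNIV "borel_rectangles :: ('a \<times> 'b) set set"
    by (rule semiring_of_sets_borel_rectangles)
  have nonneg: "f R \<ge> 0" if "R \<in> borel_rectangles" for R using that rect by blast
  have "countably_additive borel_rectangles (\<lambda>R. ennreal (f R))"
    unfolding countably_additive_def
  proof (intro allI impI)
    fix A :: "nat \<Rightarrow> ('a \<times> 'b) set"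
    assume A: "range A \<subseteq> borel_rectangles" "disjoint_family A"
    then have "\<And>n. A n \<in> sets borel" using sets_borel_prod_eq_sigma_rectangles by blast
    then have sums: "(\<lambda>n. f (A n)) sums f (\<Union>n. A n)"
      using A(2) by (rule borel_countably_additiveD[OF f])
    have "(\<Sum>n. ennreal (f (A n))) = ennreal (\<Sum>n. f (A n))"
      using nonneg[OF range_subsetD[OF A(1)]] by (intro suminf_ennreal2 sums_summable[OF sums])
    then show "(\<Sum>n. ennreal (f (A n))) = ennreal (f (\<Union>n. A n))" using sums_unique[OF sums] by simp
  qed
  moreover have "positive borel_rectangles (\<lambda>R. ennreal (f R))"
    unfolding positive_def by (simp add: borel_countably_additive_empty[OF f])
  ultimately obtain \<mu> where \<mu>: "\<And>R. R \<in> borel_rectangles \<Longrightarrow> \<mu> R = ennreal (f R)"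
      "measure_space UNIV (sigma_sets UNIV borel_rectangles) \<mu>"
    using caratheodory by blast
  define N where "N = measure_of UNIV (sigma_sets UNIV borel_rectangles) \<mu>"
  have sa: "sigma_algebra UNIV (sigma_sets UNIV (borel_rectangles :: ('a \<times> 'b) set set))"
    and "positive (sigma_sets UNIV borel_rectangles) \<mu>"
    and "countably_additive (sigma_sets UNIV borel_rectangles) \<mu>"
    using \<mu>(2) unfolding measure_space_def by auto
  then have emeasure_N: "emeasure N R = ennreal (f R)" if "R \<in> borel_rectangles" for R
    unfolding N_def using that \<mu>(1) by (simp add: emeasure_measure_of_sigma sigma_sets.Basic)
  have sets_N: "sets N = sets borel" and space_N: "space N = UNIV"
    unfolding N_def sets_borel_prod_eq_sigma_rectangles
    using sigma_algebra.sets_measure_of_eq[OF sa] sigma_algebra.space_measure_of_eq[OF sa] by auto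
  have "UNIV \<in> (borel_rectangles :: ('a \<times> 'b) set set)" by (auto intro!: exI[of _ UNIV])
  then have "finite_measure N" by (intro finite_measureI) (simp add: space_N emeasure_N)
  then show ?thesis
    using that sets_N emeasure_N nonneg by (simp add: measure_def)
qed

lemma borel_countably_additive_nonneg_on_Times:
  fixes f :: "('a::second_countable_topology \<times> 'b::second_countable_topology) set \<Rightarrow> real"
  assumes f: "borel_countably_additive f"
    and rect: "\<And>X Y. X \<in> sets borel \<Longrightarrow> Y \<in> sets borel \<Longrightarrow> f (X \<times> Y) \<ge> 0"
    and Z: "Z \<in> sets borel"
  shows "f Z \<ge> 0"
proof -
  obtain N where N: "finite_measure N" "sets N = sets borel"
    "\<And>R. R \<in> borel_rectangles \<Longrightarrow> measure N R = f R"
    using finite_measure_extending_rectangles[OF f rect] by blast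
  have "borel_countably_additive (measure N)"
    unfolding borel_countably_additive_def
    using finite_measure.finite_measure_UNION[OF N(1)] N(2) by auto
  then have "f Z = measure N Z"
    by (intro borel_countably_additive_eq_on_Times[OF f _ _ Z]) (auto intro!: N(3)[symmetric])
  then show ?thesis by simp
qed

lemma finite_measure_of_countably_additive:
  fixes M :: "'x measure" and f :: "'x set \<Rightarrow> real"
  assumes nonneg: "\<And>X. X \<in> sets M \<Longrightarrow> f X \<ge> 0"
    and sums: "\<And>A. range A \<subseteq> sets M \<Longrightarrow> disjoint_family A \<Longrightarrow> (\<lambda>n. f (A n)) sums f (\<Union>n. A n)"
  obtains N where "sets N = sets M" "space N = space M" "finite_measure N"
    "\<And>X. X \<in> sets M \<Longrightarrow> measure N X = f X"
proof -
  define N where "N = measure_of (space M) (sets M) (\<lambda>X. ennreal (f X))"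
  have "f {} = 0"
    using sums[of "\<lambda>n. {}"] by (intro sums_const_self_eq_0) (simp add: disjoint_family_on_def)
  then have "positive (sets M) (\<lambda>X. ennreal (f X))" unfolding positive_def by simp
  moreover have "countably_additive (sets M) (\<lambda>X. ennreal (f X))"
    unfolding countably_additive_def
  proof (intro allI impI)
    fix A :: "nat \<Rightarrow> 'x set" assume A: "range A \<subseteq> sets M" "disjoint_family A"
    then have s: "(\<lambda>n. f (A n)) sums f (\<Union>n. A n)" by (rule sums)
    have "(\<Sum>n. ennreal (f (A n))) = ennreal (\<Sum>n. f (A n))"
      using A nonneg by (intro suminf_ennreal2 sums_summable[OF s]) auto
    then show "(\<Sum>n. ennreal (f (A n))) = ennreal (f (\<Union>n. A n))" using sums_unique[OF s] by simp
  qed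
  ultimately have emeasure_N: "emeasure N X = ennreal (f X)" if "X \<in> sets M" for X
    unfolding N_def using that by (intro emeasure_measure_of_sigma) (auto intro: sets.sigma_algebra_axioms)
  have sets_N: "sets N = sets M" and space_N: "space N = space M"
    unfolding N_def by simp_all
  have "finite_measure N" by (rule finite_measureI) (simp add: emeasure_N space_N)
  then show ?thesis using that sets_N space_N emeasure_N nonneg by (simp add: measure_def)
qed

section \<open>Complex combinations of finite measures\<close>

inductive measure_comb :: "('x::topological_space set \<Rightarrow> complex) \<Rightarrow> bool" where
  measure_comb_measure:
    "finite_measure \<mu> \<Longrightarrow> sets \<mu> = sets borel \<Longrightarrow> measure_comb (\<lambda>Z. of_real (measure \<mu> Z))"
| measure_comb_zero: "measure_comb (\<lambda>Z. 0)"
| measure_comb_lincomb: "measure_comb f \<Longrightarrow> measure_comb g \<Longrightarrow> measure_comb (\<lambda>Z. c * f Z + g Z)"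
| measure_comb_cong: "measure_comb f \<Longrightarrow> \<forall>Z\<in>sets borel. f Z = g Z \<Longrightarrow> measure_comb g"

lemma measure_comb_add: "measure_comb f \<Longrightarrow> measure_comb g \<Longrightarrow> measure_comb (\<lambda>Z. f Z + g Z)"
  using measure_comb_lincomb[of f g 1] by simp

lemma measure_comb_scale: "measure_comb f \<Longrightarrow> measure_comb (\<lambda>Z. c * f Z)"
  using measure_comb_lincomb[OF _ measure_comb_zero, of f c] by simp

lemma measure_comb_sum:
  "finite I \<Longrightarrow> (\<And>i. i \<in> I \<Longrightarrow> measure_comb (F i)) \<Longrightarrow> measure_comb (\<lambda>Z. \<Sum>i\<in>I. F i Z)"
  by (induction I rule: finite_induct) (auto intro: measure_comb_add measure_comb_zero)

lemma measure_comb_countably_additive: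
  fixes f :: "'x::topological_space set \<Rightarrow> complex"
  shows "measure_comb f \<Longrightarrow> borel_countably_additive f"
proof (induction rule: measure_comb.induct)
  case (measure_comb_measure \<mu>)
  show ?case
    unfolding borel_countably_additive_def
  proof (intro allI impI)
    fix A :: "nat \<Rightarrow> 'x set" assume "\<forall>n. A n \<in> sets borel" "disjoint_family A"
    then have "(\<lambda>n. measure \<mu> (A n)) sums measure \<mu> (\<Union>n. A n)"
      using measure_comb_measure by (intro finite_measure.finite_measure_UNION) auto
    then show "(\<lambda>n. of_real (measure \<mu> (A n))) sums (of_real (measure \<mu> (\<Union>n. A n)) :: complex)"
      by (simp only: sums_of_real_iff)
  qed
next
  case (measure_comb_lincomb f g c)
  show ?case
    unfolding borel_countably_additive_def
  proof (intro allI impI)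
    fix A :: "nat \<Rightarrow> 'x set" assume "\<forall>n. A n \<in> sets borel" "disjoint_family A"
    then show "(\<lambda>n. c * f (A n) + g (A n)) sums (c * f (\<Union>n. A n) + g (\<Union>n. A n))"
      by (intro sums_add sums_mult borel_countably_additiveD[OF measure_comb_lincomb.IH(1)]
          borel_countably_additiveD[OF measure_comb_lincomb.IH(2)]) auto
  qed
next
  case (measure_comb_cong f g)
  show ?case
    unfolding borel_countably_additive_def
  proof (intro allI impI)
    fix A :: "nat \<Rightarrow> 'x set" assume A: "\<forall>n. A n \<in> sets borel" "disjoint_family A"
    then have "(\<Union>n. A n) \<in> sets borel" by auto
    then show "(\<lambda>n. g (A n)) sums g (\<Union>n. A n)"
      using borel_countably_additiveD[OF measure_comb_cong.IH, of A] A measure_comb_cong.hyps(2)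
      by simp
  qed
qed (simp add: borel_countably_additive_def)

definition measure_comb_on_rectangles ::
    "('a::topological_space set \<Rightarrow> 'b::topological_space set \<Rightarrow> complex) \<Rightarrow> bool" where
  "measure_comb_on_rectangles F \<longleftrightarrow> (\<exists>h :: ('a \<times> 'b) set \<Rightarrow> complex. measure_comb h \<and>
     (\<forall>X\<in>sets borel. \<forall>Y\<in>sets borel. h (X \<times> Y) = F X Y))"

lemma measure_comb_on_rectangles_cong:
  "measure_comb_on_rectangles F \<Longrightarrow> (\<And>X Y. X \<in> sets borel \<Longrightarrow> Y \<in> sets borel \<Longrightarrow> F X Y = G X Y)
    \<Longrightarrow> measure_comb_on_rectangles G"
  unfolding measure_comb_on_rectangles_def by simp

lemma measure_comb_on_rectangles_zero: "measure_comb_on_rectangles (\<lambda>X Y. 0)"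
  unfolding measure_comb_on_rectangles_def by (blast intro: measure_comb_zero)

lemma measure_comb_on_rectangles_lincomb:
  assumes "measure_comb_on_rectangles F" "measure_comb_on_rectangles G"
  shows "measure_comb_on_rectangles (\<lambda>X Y. c * F X Y + G X Y)"
proof -
  obtain f g where "measure_comb f" "\<forall>X\<in>sets borel. \<forall>Y\<in>sets borel. f (X \<times> Y) = F X Y"
    "measure_comb g" "\<forall>X\<in>sets borel. \<forall>Y\<in>sets borel. g (X \<times> Y) = G X Y"
    using assms unfolding measure_comb_on_rectangles_def by blast
  then show ?thesis
    unfolding measure_comb_on_rectangles_def
    by (intro exI[of _ "\<lambda>Z. c * f Z + g Z"]) (auto intro: measure_comb_lincomb)
qed

lemma measure_comb_on_rectangles_add:
  "measure_comb_on_rectangles F \<Longrightarrow> measure_comb_on_rectangles G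
    \<Longrightarrow> measure_comb_on_rectangles (\<lambda>X Y. F X Y + G X Y)"
  using measure_comb_on_rectangles_lincomb[of F G 1] by simp

lemma measure_comb_on_rectangles_scale:
  "measure_comb_on_rectangles F \<Longrightarrow> measure_comb_on_rectangles (\<lambda>X Y. c * F X Y)"
  using measure_comb_on_rectangles_lincomb[OF _ measure_comb_on_rectangles_zero, of F c] by simp

lemma measure_comb_on_rectangles_sum:
  "finite I \<Longrightarrow> (\<And>i. i \<in> I \<Longrightarrow> measure_comb_on_rectangles (F i))
    \<Longrightarrow> measure_comb_on_rectangles (\<lambda>X Y. \<Sum>i\<in>I. F i X Y)"
  by (induction I rule: finite_induct)
    (auto intro: measure_comb_on_rectangles_zero measure_comb_on_rectangles_add)

lemma measure_comb_on_rectangles_measure_Times: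
  fixes \<mu> :: "'a::second_countable_topology measure" and \<nu> :: "'b::second_countable_topology measure"
  assumes \<mu>: "finite_measure \<mu>" "sets \<mu> = sets borel" and \<nu>: "finite_measure \<nu>" "sets \<nu> = sets borel"
  shows "measure_comb_on_rectangles (\<lambda>X Y. of_real (measure \<mu> X) * of_real (measure \<nu> Y))"
proof -
  interpret \<nu>: finite_measure \<nu> by fact
  have "sets (\<mu> \<Otimes>\<^sub>M \<nu>) = sets (borel \<Otimes>\<^sub>M borel :: ('a \<times> 'b) measure)"
    using \<mu> \<nu> by (intro sets_pair_measure_cong) auto
  then have "sets (\<mu> \<Otimes>\<^sub>M \<nu>) = sets (borel :: ('a \<times> 'b) measure)" by (metis borel_prod)
  moreover have "measure (\<mu> \<Otimes>\<^sub>M \<nu>) (X \<times> Y) = measure \<mu> X * measure \<nu> Y"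
    if "X \<in> sets borel" "Y \<in> sets borel" for X Y
    using \<nu>.emeasure_pair_measure_Times[of X \<mu> Y] that \<mu> \<nu>
    by (simp add: measure_def enn2real_mult)
  ultimately show ?thesis
    unfolding measure_comb_on_rectangles_def using \<mu> \<nu>
    by (intro exI[of _ "\<lambda>Z. of_real (measure (\<mu> \<Otimes>\<^sub>M \<nu>) Z)"])
      (auto intro: measure_comb_measure finite_measure_pair_measure)
qed

lemma measure_comb_on_rectangles_mult:
  fixes f :: "'a::second_countable_topology set \<Rightarrow> complex"
    and g :: "'b::second_countable_topology set \<Rightarrow> complex"
  assumes "measure_comb f" "measure_comb g"
  shows "measure_comb_on_rectangles (\<lambda>X Y. f X * g Y)"
  using assms(1)
proof (induction rule: measure_comb.induct)
  case (measure_comb_measure \<mu>)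
  note \<mu> = this
  show ?case
    using assms(2)
  proof (induction rule: measure_comb.induct)
    case (measure_comb_measure \<nu>)
    then show ?case by (rule measure_comb_on_rectangles_measure_Times[OF \<mu>])
  next
    case measure_comb_zero
    then show ?case using measure_comb_on_rectangles_zero by simp
  next
    case (measure_comb_lincomb g1 g2 c)
    from measure_comb_on_rectangles_lincomb[OF measure_comb_lincomb.IH, of c]
    show ?case by (rule measure_comb_on_rectangles_cong) (simp add: algebra_simps)
  next
    case (measure_comb_cong g1 g2)
    from measure_comb_cong.IH show ?case
      by (rule measure_comb_on_rectangles_cong) (simp add: measure_comb_cong.hyps)
  qed
next
  case measure_comb_zero
  then show ?case using measure_comb_on_rectangles_zero by simp
next
  case (measure_comb_lincomb f1 f2 c)
  from measure_comb_on_rectangles_lincomb[OF measure_comb_lincomb.IH, of c]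
  show ?case by (rule measure_comb_on_rectangles_cong) (simp add: algebra_simps)
next
  case (measure_comb_cong f1 f2)
  from measure_comb_cong.IH show ?case
    by (rule measure_comb_on_rectangles_cong) (simp add: measure_comb_cong.hyps)
qed

section \<open>Observables\<close>

lemma observable_pos_op: "observable \<Omega> M \<Longrightarrow> X \<in> events \<Omega> \<Longrightarrow> pos_op (M X)"
  unfolding observable_def by blast

lemma observable_sums:
  "observable \<Omega> M \<Longrightarrow> (\<And>n. A n \<in> events \<Omega>) \<Longrightarrow> disjoint_family A
    \<Longrightarrow> (\<lambda>n. sesq (M (A n)) v w) sums sesq (M (\<Union>n. A n)) v w"
  unfolding observable_def sesq_def by blast

lemma observable_space: "observable \<Omega> M \<Longrightarrow> M \<Omega> = mat 1"
  unfolding observable_def by blast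

lemma Int_mem_events: "\<Omega> \<in> sets borel \<Longrightarrow> X \<in> sets borel \<Longrightarrow> X \<inter> \<Omega> \<in> events \<Omega>"
  unfolding events_def by auto

lemma measure_comb_observable_sesq:
  fixes M :: "'a::topological_space set \<Rightarrow> complex^'d::finite^'d"
  assumes M: "observable \<Omega> M" and \<Omega>: "\<Omega> \<in> sets borel"
  shows "measure_comb (\<lambda>X. sesq (M (X \<inter> \<Omega>)) u u)"
proof -
  have sums: "(\<lambda>n. Re (sesq (M (A n \<inter> \<Omega>)) u u)) sums Re (sesq (M ((\<Union>n. A n) \<inter> \<Omega>)) u u)"
    if "range A \<subseteq> sets borel" "disjoint_family A" for A :: "nat \<Rightarrow> 'a set"
  proof -
    have "(\<lambda>n. sesq (M (A n \<inter> \<Omega>)) u u) sums sesq (M (\<Union>n. A n \<inter> \<Omega>)) u u"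
      using that \<Omega> by (intro observable_sums[OF M])
        (auto simp: Int_mem_events disjoint_family_on_def)
    then show ?thesis by (simp add: sums_Re)
  qed
  obtain N where N: "sets N = sets borel" "space N = UNIV" "finite_measure N"
      "\<And>X. X \<in> sets borel \<Longrightarrow> measure N X = Re (sesq (M (X \<inter> \<Omega>)) u u)"
    by (rule finite_measure_of_countably_additive[of borel "\<lambda>X. Re (sesq (M (X \<inter> \<Omega>)) u u)"])
      (use pos_opD(2)[OF observable_pos_op[OF M Int_mem_events[OF \<Omega>]]] sums in auto)
  show ?thesis
    using measure_comb_measure[OF N(3,1)]
  proof (rule measure_comb_cong, intro ballI)
    fix X :: "'a set" assume "X \<in> sets borel"
    then show "of_real (measure N X) = sesq (M (X \<inter> \<Omega>)) u u"
      using N(4) pos_op_sesq_real[OF observable_pos_op[OF M Int_mem_events[OF \<Omega>]]] by simp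
  qed
qed

lemma measure_comb_observable_entry:
  assumes "observable \<Omega> M" "\<Omega> \<in> sets borel"
  shows "measure_comb (\<lambda>X. M (X \<inter> \<Omega>) $ i $ j)"
proof -
  let ?q = "\<lambda>c X. sesq (M (X \<inter> \<Omega>)) (axis j 1 + c *s axis i 1) (axis j 1 + c *s axis i 1)"
  have "measure_comb (\<lambda>X. (1/4) * (?q 1 X + (\<i> * ?q \<i> X + ((-1) * ?q (-1) X + (-\<i>) * ?q (-\<i>) X))))"
    by (intro measure_comb_scale measure_comb_add measure_comb_observable_sesq assms)
  then show ?thesis
    by (rule measure_comb_cong)
      (simp add: mat_entry_eq_sesq[of _ i j] sesq_polarization[of _ "axis i 1"] algebra_simps)
qed

lemma measure_comb_sesq_of_entries:
  "(\<And>i j. measure_comb (\<lambda>Z. J Z $ i $ j)) \<Longrightarrow> measure_comb (\<lambda>Z. sesq (J Z) v w)"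
proof -
  assume "\<And>i j. measure_comb (\<lambda>Z. J Z $ i $ j)"
  then have "measure_comb (\<lambda>Z. \<Sum>i\<in>UNIV. \<Sum>j\<in>UNIV. (cnj (v$i) * w$j) * J Z $ i $ j)"
    by (intro measure_comb_sum measure_comb_scale) auto
  then show ?thesis by (rule measure_comb_cong) (simp add: sesq_expand mult_ac)
qed

lemma measure_comb_on_rectangles_clone_joint:
  fixes A :: "'a::second_countable_topology set \<Rightarrow> complex^'d::finite^'d"
    and B :: "'b::second_countable_topology set \<Rightarrow> complex^'d^'d"
  assumes A: "\<And>i j. measure_comb (\<lambda>X. A X $ i $ j)" and B: "\<And>i j. measure_comb (\<lambda>Y. B Y $ i $ j)"
  shows "measure_comb_on_rectangles (\<lambda>X Y. clone_joint (A X) (B Y) $ i $ j)"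
proof -
  have "measure_comb_on_rectangles (\<lambda>X Y. (1 / (2 * (1 + of_nat CARD('d)))) *
      ((\<Sum>k\<in>UNIV. A X $ i $ j * B Y $ k $ k) + (\<Sum>k\<in>UNIV. A X $ k $ k * B Y $ i $ j)
       + (\<Sum>k\<in>UNIV. A X $ i $ k * B Y $ k $ j) + (\<Sum>k\<in>UNIV. A X $ k $ j * B Y $ i $ k)))"
    by (intro measure_comb_on_rectangles_scale measure_comb_on_rectangles_add
        measure_comb_on_rectangles_sum measure_comb_on_rectangles_mult A B) simp_all
  then show ?thesis
    by (rule measure_comb_on_rectangles_cong)
      (simp add: clone_joint_def trace_def matrix_matrix_mult_def sum_distrib_left
        sum_distrib_right mult.commute)
qed

lemma pos_op_of_pos_op_on_rectangles:
  fixes J :: "('a::second_countable_topology \<times> 'b::second_countable_topology) set \<Rightarrow> complex^'d::finite^'d"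
  assumes entries: "\<And>i j. measure_comb (\<lambda>Z. J Z $ i $ j)"
    and rect: "\<And>X Y. X \<in> sets borel \<Longrightarrow> Y \<in> sets borel \<Longrightarrow> pos_op (J (X \<times> Y))"
    and Z: "Z \<in> sets borel"
  shows "pos_op (J Z)"
  unfolding pos_op_def sesq_def[symmetric]
proof
  fix v
  have "borel_countably_additive (\<lambda>Z. sesq (J Z) v v)"
    by (rule measure_comb_countably_additive[OF measure_comb_sesq_of_entries[OF entries]])
  then have Im: "borel_countably_additive (\<lambda>Z. Im (sesq (J Z) v v))"
    and Re: "borel_countably_additive (\<lambda>Z. Re (sesq (J Z) v v))"
    unfolding borel_countably_additive_def using sums_Im sums_Re by blast+
  have "Im (sesq (J Z) v v) = 0"
    using borel_countably_additive_eq_on_Times[OF Im _ _ Z, of "\<lambda>_. 0"] pos_opD(1)[OF rect]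
    by (simp add: borel_countably_additive_def)
  moreover have "Re (sesq (J Z) v v) \<ge> 0"
    using borel_countably_additive_nonneg_on_Times[OF Re _ Z] pos_opD(2)[OF rect] by blast
  ultimately show "Im (sesq (J Z) v v) = 0 \<and> 0 \<le> Re (sesq (J Z) v v)" ..
qed

section \<open>Joint measurability of the noisy pair\<close>

lemma observable_clone_joint:
  fixes \<Omega>1 :: "'a::second_countable_topology set" and \<Omega>2 :: "'b::second_countable_topology set"
    and M1 :: "'a set \<Rightarrow> complex^'d::finite^'d" and M2 :: "'b set \<Rightarrow> complex^'d^'d"
  assumes \<Omega>1: "\<Omega>1 \<in> sets borel" and \<Omega>2: "\<Omega>2 \<in> sets borel"
    and M1: "observable \<Omega>1 M1" and M2: "observable \<Omega>2 M2"
  obtains J where "observable (\<Omega>1 \<times> \<Omega>2) J"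
    "\<And>X Y. X \<in> sets borel \<Longrightarrow> Y \<in> sets borel
       \<Longrightarrow> J (X \<times> Y) = clone_joint (M1 (X \<inter> \<Omega>1)) (M2 (Y \<inter> \<Omega>2))"
proof -
  have "\<forall>p. \<exists>h. measure_comb h \<and> (\<forall>X\<in>sets borel. \<forall>Y\<in>sets borel.
      h (X \<times> Y) = clone_joint (M1 (X \<inter> \<Omega>1)) (M2 (Y \<inter> \<Omega>2)) $ fst p $ snd p)"
    using measure_comb_on_rectangles_clone_joint[OF measure_comb_observable_entry[OF M1 \<Omega>1]
        measure_comb_observable_entry[OF M2 \<Omega>2]]
    unfolding measure_comb_on_rectangles_def by blast
  then obtain H where H: "\<And>p. measure_comb (H p)"
    "\<And>p X Y. X \<in> sets borel \<Longrightarrow> Y \<in> sets borel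
       \<Longrightarrow> H p (X \<times> Y) = clone_joint (M1 (X \<inter> \<Omega>1)) (M2 (Y \<inter> \<Omega>2)) $ fst p $ snd p"
    by metis
  define J where "J Z = (\<chi> i j. H (i, j) Z)" for Z
  have entries: "measure_comb (\<lambda>Z. J Z $ i $ j)" for i j
    unfolding J_def using H(1) by simp
  have rect: "J (X \<times> Y) = clone_joint (M1 (X \<inter> \<Omega>1)) (M2 (Y \<inter> \<Omega>2))"
    if "X \<in> sets borel" "Y \<in> sets borel" for X Y
    using H(2)[OF that] unfolding J_def by (simp add: vec_eq_iff)
  have "pos_op (J Z)" if "Z \<in> events (\<Omega>1 \<times> \<Omega>2)" for Z
  proof (rule pos_op_of_pos_op_on_rectangles[OF entries])
    show "pos_op (J (X \<times> Y))" if "X \<in> sets borel" "Y \<in> sets borel" for X Y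
      unfolding rect[OF that] using that
      by (intro clone_joint_pos observable_pos_op[OF M1] observable_pos_op[OF M2] Int_mem_events \<Omega>1 \<Omega>2)
    show "Z \<in> sets borel" using that by (simp add: events_def)
  qed
  moreover have "(\<lambda>n. sesq (J (A n)) v w) sums sesq (J (\<Union>n. A n)) v w"
    if "\<And>n. A n \<in> events (\<Omega>1 \<times> \<Omega>2)" "disjoint_family A" for A v w
    using that unfolding events_def
    by (intro borel_countably_additiveD[OF measure_comb_countably_additive]
        measure_comb_sesq_of_entries entries) auto
  moreover have "J (\<Omega>1 \<times> \<Omega>2) = mat 1"
    using rect[OF \<Omega>1 \<Omega>2] observable_space[OF M1] observable_space[OF M2] clone_joint_mat1_mat1
    by simp
  ultimately have "observable (\<Omega>1 \<times> \<Omega>2) J"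
    unfolding observable_def sesq_def by blast
  with rect show ?thesis using that by blast
qed

lemma sets_restrict_borel_eq_events: "\<Omega> \<in> sets borel \<Longrightarrow> sets (restrict_space borel \<Omega>) = events \<Omega>"
  unfolding events_def by (auto simp: sets_restrict_space_iff)

lemma trivial_obs_prob_space:
  assumes "prob_space \<mu>" "space \<mu> = \<Omega>" "sets \<mu> = sets (restrict_space borel \<Omega>)" "\<Omega> \<in> sets borel"
  shows "trivial_obs \<Omega> (\<lambda>X. (mat (of_real (measure \<mu> X)) :: complex^'d::finite^'d))"
proof -
  have "observable \<Omega> (\<lambda>X. (mat (of_real (measure \<mu> X)) :: complex^'d^'d))"
    unfolding observable_def sesq_def[symmetric] sesq_mat
  proof (intro conjI ballI allI impI)
    show "pos_op (mat (of_real (measure \<mu> X)) :: complex^'d^'d)" for X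
      by (simp add: pos_op_mat)
    show "(\<lambda>n. of_real (measure \<mu> (A n)) * cinner v w) sums (of_real (measure \<mu> (\<Union>n. A n)) * cinner v w)"
      if "\<forall>n. A n \<in> events \<Omega>" "disjoint_family A" for A :: "nat \<Rightarrow> _" and v w :: "complex^'d"
      using that assms(3,4) finite_measure.finite_measure_UNION[OF prob_space.finite_measure[OF assms(1)], of A]
      by (intro sums_mult2) (auto simp: sums_of_real_iff sets_restrict_borel_eq_events)
    show "(mat (of_real (measure \<mu> \<Omega>)) :: complex^'d^'d) = mat 1"
      using prob_space.prob_space[OF assms(1)] assms(2) by simp
  qed
  with assms show ?thesis
    unfolding trivial_obs_def sets_restrict_borel_eq_events[OF assms(4)] by auto
qed

lemma exists_prob_space_normalized_trace:
  fixes M :: "'a::topological_space set \<Rightarrow> complex^'d::finite^'d"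
  assumes \<Omega>: "\<Omega> \<in> sets borel" and M: "observable \<Omega> M"
  obtains \<mu> where "prob_space \<mu>" "space \<mu> = \<Omega>" "sets \<mu> = sets (restrict_space borel \<Omega>)"
    "\<And>X. X \<in> events \<Omega> \<Longrightarrow> of_real (measure \<mu> X) = trace (M X) / of_nat CARD('d)"
proof -
  define t where "t X = Re (trace (M X)) / real CARD('d)" for X
  have sums: "(\<lambda>n. t (A n)) sums t (\<Union>n. A n)"
    if "range A \<subseteq> events \<Omega>" "disjoint_family A" for A
  proof -
    have "(\<lambda>n. \<Sum>i\<in>UNIV. sesq (M (A n)) (axis i 1) (axis i 1))
        sums (\<Sum>i\<in>UNIV. sesq (M (\<Union>n. A n)) (axis i 1) (axis i 1))"
      using that by (intro sums_sum observable_sums[OF M]) auto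
    then show ?thesis
      unfolding t_def trace_def mat_entry_eq_sesq[symmetric] by (intro sums_divide sums_Re)
  qed
  obtain \<mu> where \<mu>: "sets \<mu> = sets (restrict_space borel \<Omega>)" "space \<mu> = space (restrict_space borel \<Omega>)"
    "finite_measure \<mu>" "\<And>X. X \<in> sets (restrict_space borel \<Omega>) \<Longrightarrow> measure \<mu> X = t X"
    by (rule finite_measure_of_countably_additive[of "restrict_space borel \<Omega>" t])
      (use sums pos_op_trace_nonneg[OF observable_pos_op[OF M]] in
        \<open>auto simp: t_def sets_restrict_borel_eq_events[OF \<Omega>]\<close>)
  have space: "space \<mu> = \<Omega>" using \<mu>(2) by (simp add: space_restrict_space)
  have events: "X \<in> events \<Omega> \<Longrightarrow> measure \<mu> X = t X" for X
    using \<mu>(4) sets_restrict_borel_eq_events[OF \<Omega>] by blast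
  have "\<Omega> \<in> events \<Omega>" using \<Omega> unfolding events_def by auto
  then have "measure \<mu> \<Omega> = 1"
    using events observable_space[OF M] by (simp add: t_def trace_I)
  then have "prob_space \<mu>"
    using finite_measure.emeasure_eq_measure[OF \<mu>(3)] space by (intro prob_spaceI) simp
  moreover have "of_real (measure \<mu> X) = trace (M X) / of_nat CARD('d)" if "X \<in> events \<Omega>" for X
    using events[OF that] pos_op_trace_real[OF observable_pos_op[OF M that]]
    unfolding t_def by (metis of_real_divide of_real_of_nat_eq)
  ultimately show ?thesis using that \<mu>(1) space by blast
qed

lemma clone_weight_mem_jm_region:
  fixes \<Omega>1 :: "'a::second_countable_topology set" and \<Omega>2 :: "'b::second_countable_topology set"
    and M1 :: "'a set \<Rightarrow> complex^'d::finite^'d" and M2 :: "'b set \<Rightarrow> complex^'d^'d"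
  defines "lam \<equiv> (2 + real CARD('d)) / (2 * (1 + real CARD('d)))"
  assumes \<Omega>1: "\<Omega>1 \<in> sets borel" and \<Omega>2: "\<Omega>2 \<in> sets borel"
    and M1: "observable \<Omega>1 M1" and M2: "observable \<Omega>2 M2"
  shows "(lam, lam) \<in> jm_region \<Omega>1 \<Omega>2 M1 M2"
proof -
  obtain J where J: "observable (\<Omega>1 \<times> \<Omega>2) J"
    "\<And>X Y. X \<in> sets borel \<Longrightarrow> Y \<in> sets borel
       \<Longrightarrow> J (X \<times> Y) = clone_joint (M1 (X \<inter> \<Omega>1)) (M2 (Y \<inter> \<Omega>2))"
    using observable_clone_joint[OF \<Omega>1 \<Omega>2 M1 M2] by blast
  obtain \<mu>1 where \<mu>1: "prob_space \<mu>1" "space \<mu>1 = \<Omega>1" "sets \<mu>1 = sets (restrict_space borel \<Omega>1)"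
    "\<And>X. X \<in> events \<Omega>1 \<Longrightarrow> of_real (measure \<mu>1 X) = trace (M1 X) / of_nat CARD('d)"
    using exists_prob_space_normalized_trace[OF \<Omega>1 M1] by blast
  obtain \<mu>2 where \<mu>2: "prob_space \<mu>2" "space \<mu>2 = \<Omega>2" "sets \<mu>2 = sets (restrict_space borel \<Omega>2)"
    "\<And>Y. Y \<in> events \<Omega>2 \<Longrightarrow> of_real (measure \<mu>2 Y) = trace (M2 Y) / of_nat CARD('d)"
    using exists_prob_space_normalized_trace[OF \<Omega>2 M2] by blast
  define T1 where "T1 X = (mat (of_real (measure \<mu>1 X)) :: complex^'d^'d)" for X
  define T2 where "T2 Y = (mat (of_real (measure \<mu>2 Y)) :: complex^'d^'d)" for Y
  have "J (X \<times> \<Omega>2) = lam *\<^sub>R M1 X + (1 - lam) *\<^sub>R T1 X" if "X \<in> events \<Omega>1" for X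
    using that J(2) \<Omega>2 observable_space[OF M2] \<mu>1(4)
    unfolding T1_def lam_def events_def by (auto simp: Int_absorb2 clone_joint_mat1)
  moreover have "J (\<Omega>1 \<times> Y) = lam *\<^sub>R M2 Y + (1 - lam) *\<^sub>R T2 Y" if "Y \<in> events \<Omega>2" for Y
    using that J(2) \<Omega>1 observable_space[OF M1] \<mu>2(4)
    unfolding T2_def lam_def events_def by (auto simp: Int_absorb2 clone_joint_commute[of "mat 1"] clone_joint_mat1)
  ultimately have "jointly_measurable \<Omega>1 \<Omega>2 (\<lambda>X. lam *\<^sub>R M1 X + (1 - lam) *\<^sub>R T1 X)
      (\<lambda>Y. lam *\<^sub>R M2 Y + (1 - lam) *\<^sub>R T2 Y)"
    unfolding jointly_measurable_def using J(1) by blast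
  moreover have "trivial_obs \<Omega>1 T1" "trivial_obs \<Omega>2 T2"
    unfolding T1_def T2_def using trivial_obs_prob_space \<mu>1 \<mu>2 \<Omega>1 \<Omega>2 by blast+
  moreover have "lam \<in> {0..1}" unfolding lam_def by (simp add: field_simps)
  ultimately show ?thesis unfolding jm_region_def by blast
qed

lemma le_jmd_of_diagonal_mem:
  "a \<in> {0..1} \<Longrightarrow> (a, a) \<in> jm_region \<Omega>1 \<Omega>2 M1 M2 \<Longrightarrow> a \<le> jmd \<Omega>1 \<Omega>2 M1 M2"
  unfolding jmd_def by (rule cSup_upper) (auto intro: bdd_aboveI[of _ 1])

lemma not_maximally_incompatible_of_diagonal_mem:
  "1/2 < a \<Longrightarrow> (a, a) \<in> jm_region \<Omega>1 \<Omega>2 M1 M2 \<Longrightarrow> \<not> maximally_incompatible \<Omega>1 \<Omega>2 M1 M2"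
  unfolding maximally_incompatible_def by auto

theorem theorem1:
  fixes \<Omega>1 :: "'a::euclidean_space set" and \<Omega>2 :: "'b::euclidean_space set"
    and M1 :: "'a set \<Rightarrow> complex^'d::finite^'d" and M2 :: "'b set \<Rightarrow> complex^'d^'d"
  assumes "CARD('d) \<ge> 2"
    and "\<Omega>1 \<in> sets borel" and "\<Omega>2 \<in> sets borel"
    and "observable \<Omega>1 M1" and "observable \<Omega>2 M2"
  shows "1/2 < (2 + real CARD('d)) / (2 * (1 + real CARD('d)))
         \<and> (2 + real CARD('d)) / (2 * (1 + real CARD('d))) \<le> jmd \<Omega>1 \<Omega>2 M1 M2
         \<and> \<not> maximally_incompatible \<Omega>1 \<Omega>2 M1 M2"
proof -
  \<comment> \<open>The bound holds in every dimension.\<close>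
  let ?lam = "(2 + real CARD('d)) / (2 * (1 + real CARD('d)))"
  have half: "1/2 < ?lam" by (simp add: field_simps)
  have "?lam \<in> {0..1}" by (simp add: field_simps)
  moreover have "(?lam, ?lam) \<in> jm_region \<Omega>1 \<Omega>2 M1 M2"
    using clone_weight_mem_jm_region assms(2-5) by blast
  ultimately show ?thesis using half le_jmd_of_diagonal_mem not_maximally_incompatible_of_diagonal_mem by blast
qed

end
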